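(* Let $\hat A_n(t)=\sum_{\pi\in\mathfrak S_n}t^{\mathrm{altdes}(\pi)+1}$ for $n\ge1$. Then \[ 1+\sum_{n\ge1}\hat A_n(t)\frac{x^n}{n!}=\frac{1-t}{1-t\bigl(\sec((1-t)x)+\tan((1-t)x)\bigr)}. \]
   Context: For $\pi\in\mathfrak S_n$, $i\in[n-1]$ is an alternating descent if $i$ odd and $\pi_i>\pi_{i+1}$, or $i$ even and $\pi_i<\pi_{i+1}$; $\mathrm{altdes}(\pi)$ is the number of alternating descents. *)

theory Defs
  imports "HOL-Combinatorics.Permutations" "HOL-Computational_Algebra.Formal_Power_Series"
begin

definition altdes :: "nat \<Rightarrow> (nat \<Rightarrow> nat) \<Rightarrow> nat" where
  "altdes n \<pi> = card {i \<in> {1..n-1}.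
      (odd i \<and> \<pi> i > \<pi> (Suc i)) \<or> (even i \<and> \<pi> i < \<pi> (Suc i))}"

definition altEulerian :: "nat \<Rightarrow> 'a::comm_ring_1 \<Rightarrow> 'a" where
  "altEulerian n t = (\<Sum>\<pi> \<in> {\<pi>. \<pi> permutes {1..n}}. t ^ (altdes n \<pi> + 1))"

end

theory Submission
  imports Defs "HOL-Combinatorics.Multiset_Permutations"
begin

(*
  Write a permutation of [n] as a word and split it at its maximal letter m:
  w = u m v.  Depending on the parity of |u|, the letter m sits at an odd or an
  even position, which decides whether the two gaps around m are alternating
  descents and whether v is read with the same or with the opposite parity.
  Reading v with the opposite parity amounts to negating its letters.  Hence
  the numbers alpha(n) = sum over words w of t^altdes(w) satisfy the recursion
  alpha(n+1) = sum_k (n choose k) weight(k, n-k) alpha(k) alpha(n-k).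

  The analytic part translates the recursion into a Riccati-type differential
  equation for G(x) = 1 + sum_n t alpha(n) x^n/n!, involving the reflection
  G(x) |-> G(-x); its solutions are determined by their constant term.  Finally
  the closed form (1-t)/(1 - t(sec((1-t)x) + tan((1-t)x))) is shown to solve the
  same equation, using the derivatives of sin and cos and sin^2 + cos^2 = 1.
*)

section \<open>Alternating descents of integer words\<close>

text \<open>Alternating descents of a word whose first gap has parity \<open>p\<close>: for \<open>p = True\<close>
  the first gap is at an odd position and counts if it is a descent; parities alternate.\<close>

fun alt_des_list :: "bool \<Rightarrow> int list \<Rightarrow> nat" where
  "alt_des_list p (x # y # zs) =
     (if (p \<and> x > y) \<or> (\<not> p \<and> x < y) then 1 else 0) + alt_des_list (\<not> p) (y # zs)"
| "alt_des_list p _ = 0"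

lemma alt_des_list_uminus: "alt_des_list (\<not> p) xs = alt_des_list p (map uminus xs)"
  by (induction p xs rule: alt_des_list.induct) auto

lemma alt_des_list_append:
  "alt_des_list p (xs @ y # zs) =
     alt_des_list p (xs @ [y]) + alt_des_list (p \<longleftrightarrow> even (length xs)) (y # zs)"
proof (induction xs arbitrary: p)
  case (Cons x xs)
  then show ?case by (cases xs) auto
qed simp

text \<open>If \<open>m\<close>
  lands at an odd position, both neighbouring gaps count and \<open>zs\<close> is read with the
  opposite parity; otherwise neither gap counts.\<close>

lemma alt_des_list_insert_max:
  assumes "\<forall>y\<in>set ys. y < m" "\<forall>z\<in>set zs. z < m"
  shows "alt_des_list True (ys @ m # zs) =
    (if even (length ys)
     then alt_des_list True ys + (if ys = [] then 0 else 1) + (if zs = [] then 0 else 1)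
          + alt_des_list False zs
     else alt_des_list True ys + alt_des_list True zs)"
proof (cases ys rule: rev_cases)
  case Nil
  then show ?thesis using assms by (cases zs) auto
next
  case (snoc us l)
  have "l < m" using assms(1) snoc by simp
  moreover have "alt_des_list True (us @ [l, m]) =
      alt_des_list True (us @ [l]) + alt_des_list (even (length us)) [l, m]"
    using alt_des_list_append[of True us l "[m]"] by simp
  ultimately show ?thesis
    using alt_des_list_append[of True ys m zs] assms(2) snoc by (cases zs) auto
qed


section \<open>Sums over all arrangements of a finite set\<close>

definition alt_poly :: "'a::comm_semiring_1 \<Rightarrow> int set \<Rightarrow> 'a" where
  "alt_poly t A = (\<Sum>xs\<in>permutations_of_set A. t ^ alt_des_list True xs)"

lemma alt_poly_uminus:
  "(\<Sum>zs\<in>permutations_of_set Z. t ^ alt_des_list False zs) = alt_poly t (uminus ` Z)"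
proof -
  have inj: "inj_on (map uminus) (permutations_of_set Z)"
    by (auto simp: inj_on_def)
  have perms: "permutations_of_set (uminus ` Z) = map uminus ` permutations_of_set Z"
    by (rule permutations_of_set_image_inj) simp
  have "alt_poly t (uminus ` Z) = (\<Sum>xs\<in>map uminus ` permutations_of_set Z. t ^ alt_des_list True xs)"
    unfolding alt_poly_def perms ..
  also have "\<dots> = (\<Sum>zs\<in>permutations_of_set Z. t ^ alt_des_list True (map uminus zs))"
    by (simp add: sum.reindex[OF inj])
  also have "\<dots> = (\<Sum>zs\<in>permutations_of_set Z. t ^ alt_des_list False zs)"
    using alt_des_list_uminus[of True] by simp
  finally show ?thesis ..
qed

lemma sum_permutations_of_set_split:
  assumes "finite A" "m \<in> A"
  shows "(\<Sum>xs\<in>permutations_of_set A. f xs) =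
    (\<Sum>Y\<in>Pow (A - {m}). \<Sum>ys\<in>permutations_of_set Y.
       \<Sum>zs\<in>permutations_of_set (A - {m} - Y). f (ys @ m # zs))"
proof -
  let ?B = "A - {m}"
  let ?glue = "\<lambda>(ys, zs). ys @ m # zs"
  let ?Q = "\<Union>Y\<in>Pow ?B. permutations_of_set Y \<times> permutations_of_set (?B - Y)"
  have inj: "inj_on ?glue ?Q"
  proof (rule inj_onI)
    fix p q assume p: "p \<in> ?Q" and "q \<in> ?Q" and eq: "?glue p = ?glue q"
    obtain ys zs ys' zs' where pq: "p = (ys, zs)" "q = (ys', zs')" by (cases p, cases q)
    have "m \<notin> set ys" "m \<notin> set zs"
      using p pq by (auto dest: permutations_of_setD)
    from append_Cons_eq_iff[OF this, of ys' zs'] eq pq show "p = q" by simp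
  qed
  have img: "?glue ` ?Q = permutations_of_set A"
  proof
    show "?glue ` ?Q \<subseteq> permutations_of_set A"
      using assms by (auto simp: permutations_of_set_def)
    show "permutations_of_set A \<subseteq> ?glue ` ?Q"
    proof
      fix xs assume xs: "xs \<in> permutations_of_set A"
      then have "m \<in> set xs" using assms by (auto dest: permutations_of_setD)
      then obtain ys zs where e: "xs = ys @ m # zs" by (metis split_list)
      have "(ys, zs) \<in> permutations_of_set (set ys) \<times> permutations_of_set (?B - set ys)"
        "set ys \<in> Pow ?B"
        using xs e by (auto simp: permutations_of_set_def)
      then show "xs \<in> ?glue ` ?Q" using e by force
    qed
  qed
  have fin: "finite ?B" using assms by simp
  have "(\<Sum>xs\<in>permutations_of_set A. f xs) = (\<Sum>p\<in>?Q. f (?glue p))"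
    using sum.reindex[OF inj, of f] img by simp
  also have "\<dots> = (\<Sum>Y\<in>Pow ?B. \<Sum>p\<in>permutations_of_set Y \<times> permutations_of_set (?B - Y).
      f (?glue p))"
    by (rule sum.UNION_disjoint) (use fin in \<open>auto dest: permutations_of_setD\<close>)
  also have "\<dots> = (\<Sum>Y\<in>Pow ?B. \<Sum>ys\<in>permutations_of_set Y.
      \<Sum>zs\<in>permutations_of_set (?B - Y). f (ys @ m # zs))"
    by (simp add: sum.cartesian_product case_prod_unfold)
  finally show ?thesis .
qed

lemma sum_Pow_card:
  assumes "finite B"
  shows "(\<Sum>Y\<in>Pow B. g (card Y)) = (\<Sum>k\<le>card B. of_nat (card B choose k) * g k)"
proof -
  have "(\<Sum>Y\<in>Pow B. g (card Y)) = (\<Sum>k\<le>card B. \<Sum>Y\<in>{Y. Y \<subseteq> B \<and> card Y = k}. g k)"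
    by (subst sum.group[symmetric, where g = card]) (use assms card_mono in auto)
  then show ?thesis using n_subsets[OF assms] by simp
qed

text \<open>The factor created when a new maximum separates \<open>k\<close> letters from \<open>r\<close> letters:
  at an odd position of the maximum each nonempty side contributes one alternating descent.\<close>

definition glue_weight :: "'a::comm_semiring_1 \<Rightarrow> nat \<Rightarrow> nat \<Rightarrow> 'a" where
  "glue_weight t k r =
     (if even k then t ^ ((if k = 0 then 0 else 1) + (if r = 0 then 0 else 1)) else 1)"

fun alt_seq :: "'a::comm_semiring_1 \<Rightarrow> nat \<Rightarrow> 'a" where
  "alt_seq t 0 = 1"
| "alt_seq t (Suc n) =
     (\<Sum>k\<le>n. of_nat (n choose k) * glue_weight t k (n - k) * alt_seq t k * alt_seq t (n - k))"

lemma power_alt_des_list_insert_max: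
  assumes ys: "ys \<in> permutations_of_set Y" and zs: "zs \<in> permutations_of_set Z"
    and less: "\<forall>y\<in>Y. y < m" "\<forall>z\<in>Z. z < m"
  shows "t ^ alt_des_list True (ys @ m # zs) =
    (if even (card Y)
     then glue_weight t (card Y) (card Z) * t ^ alt_des_list True ys * t ^ alt_des_list False zs
     else t ^ alt_des_list True ys * t ^ alt_des_list True zs)"
proof -
  have "set ys = Y" "set zs = Z" "card Y = length ys" "card Z = length zs"
    using ys zs by (auto simp: permutations_of_set_def distinct_card)
  then show ?thesis
    using alt_des_list_insert_max[of ys m zs] less
    by (simp add: glue_weight_def power_add mult_ac)
qed

lemma alt_poly_glue:
  assumes "\<forall>y\<in>Y. y < m" "\<forall>z\<in>Z. z < m"
  shows "(\<Sum>ys\<in>permutations_of_set Y. \<Sum>zs\<in>permutations_of_set Z.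
            t ^ alt_des_list True (ys @ m # zs))
       = glue_weight t (card Y) (card Z) * alt_poly t Y
           * alt_poly t (if even (card Y) then uminus ` Z else Z)"
proof -
  let ?Z' = "if even (card Y) then uminus ` Z else Z"
  let ?p = "\<not> even (card Y)"
  have "(\<Sum>ys\<in>permutations_of_set Y. \<Sum>zs\<in>permutations_of_set Z.
            t ^ alt_des_list True (ys @ m # zs))
      = (\<Sum>ys\<in>permutations_of_set Y. \<Sum>zs\<in>permutations_of_set Z.
            glue_weight t (card Y) (card Z) * (t ^ alt_des_list True ys * t ^ alt_des_list ?p zs))"
    by (intro sum.cong refl) (simp add: power_alt_des_list_insert_max[OF _ _ assms] glue_weight_def mult.assoc)
  also have "\<dots> = glue_weight t (card Y) (card Z) * (alt_poly t Y
      * (\<Sum>zs\<in>permutations_of_set Z. t ^ alt_des_list ?p zs))"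
    unfolding alt_poly_def sum_product by (simp add: sum_distrib_left)
  also have "(\<Sum>zs\<in>permutations_of_set Z. t ^ alt_des_list ?p zs) = alt_poly t ?Z'"
    by (simp add: alt_poly_def alt_poly_uminus)
  finally show ?thesis by (simp add: mult.assoc)
qed

lemma alt_poly_insert_max:
  assumes B: "finite B" and less: "\<forall>x\<in>B. x < m"
    and IH: "\<And>Y. finite Y \<Longrightarrow> card Y \<le> card B \<Longrightarrow> alt_poly t Y = alt_seq t (card Y)"
  shows "alt_poly t (insert m B) = alt_seq t (Suc (card B))"
proof -
  have mB: "insert m B - {m} = B" using less by auto
  have glue: "(\<Sum>ys\<in>permutations_of_set Y. \<Sum>zs\<in>permutations_of_set (B - Y).
                 t ^ alt_des_list True (ys @ m # zs))
      = glue_weight t (card Y) (card B - card Y) * alt_seq t (card Y) * alt_seq t (card B - card Y)"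
    if Y: "Y \<subseteq> B" for Y
  proof -
    have fin: "finite Y" "finite (B - Y)" using Y B finite_subset by auto
    have card: "card (B - Y) = card B - card Y" using Y fin by (simp add: card_Diff_subset)
    have "card Y \<le> card B" "card (B - Y) \<le> card B" using Y B by (auto intro: card_mono)
    then have "alt_poly t Y = alt_seq t (card Y)"
      "alt_poly t (if even (card Y) then uminus ` (B - Y) else B - Y) = alt_seq t (card B - card Y)"
      using IH fin card by (auto simp: card_image)
    moreover have "\<forall>y\<in>Y. y < m" "\<forall>z\<in>B - Y. z < m" using less Y by auto
    ultimately show ?thesis using alt_poly_glue[of Y m "B - Y" t] card by simp
  qed
  have "alt_poly t (insert m B) = (\<Sum>Y\<in>Pow B. \<Sum>ys\<in>permutations_of_set Y.
      \<Sum>zs\<in>permutations_of_set (B - Y). t ^ alt_des_list True (ys @ m # zs))"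
    unfolding alt_poly_def using sum_permutations_of_set_split[of "insert m B" m] B mB by simp
  also have "\<dots> = (\<Sum>Y\<in>Pow B.
      glue_weight t (card Y) (card B - card Y) * alt_seq t (card Y) * alt_seq t (card B - card Y))"
    using glue by (intro sum.cong) auto
  also have "\<dots> = alt_seq t (Suc (card B))"
    using sum_Pow_card[OF B,
        of "\<lambda>k. glue_weight t k (card B - k) * alt_seq t k * alt_seq t (card B - k)"]
    by (simp add: mult.assoc)
  finally show ?thesis .
qed

theorem alt_poly_eq_alt_seq:
  "finite A \<Longrightarrow> alt_poly t A = alt_seq t (card A)"
proof (induction "card A" arbitrary: A rule: less_induct)
  case less
  show ?case
  proof (cases "A = {}")
    case True
    then show ?thesis by (simp add: alt_poly_def)
  next
    case False
    define m where "m = Max A"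
    have A: "A = insert m (A - {m})" using False less.prems by (simp add: m_def insert_absorb)
    have card: "card A = Suc (card (A - {m}))"
      using A less.prems by (metis card_insert_disjoint finite_Diff Diff_iff insertI1)
    have max: "\<forall>x\<in>A - {m}. x < m"
      using less.prems m_def by (auto intro: order.not_eq_order_implies_strict)
    have "alt_poly t (insert m (A - {m})) = alt_seq t (Suc (card (A - {m})))"
      by (rule alt_poly_insert_max[OF _ max]) (use less card in auto)
    then show ?thesis using A card by simp
  qed
qed


section \<open>Permutations of \<open>{1..n}\<close> as words\<close>

lemma alt_des_list_conv_sum:
  "alt_des_list p xs = (\<Sum>i<length xs - 1.
     if (even i = p \<and> xs ! i > xs ! Suc i) \<or> (even i \<noteq> p \<and> xs ! i < xs ! Suc i) then 1 else 0)"
proof (induction p xs rule: alt_des_list.induct)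
  case (1 p x y zs)
  have "length (x # y # zs) - 1 = Suc (length (y # zs) - 1)" by simp
  then show ?case using 1 by (simp only: sum.lessThan_Suc_shift) (simp, intro sum.cong, auto)
qed auto

definition perm_word :: "nat \<Rightarrow> (nat \<Rightarrow> nat) \<Rightarrow> int list" where
  "perm_word n \<pi> = map (\<lambda>i. int (\<pi> i)) [1..<n+1]"

lemma length_perm_word [simp]: "length (perm_word n \<pi>) = n"
  by (simp add: perm_word_def del: upt_Suc)

lemma nth_perm_word [simp]: "j < n \<Longrightarrow> perm_word n \<pi> ! j = int (\<pi> (Suc j))"
  by (simp add: perm_word_def del: upt_Suc)

lemma altdes_eq_alt_des_list: "altdes n \<pi> = alt_des_list True (perm_word n \<pi>)"
proof -
  let ?gap = "\<lambda>i. if (odd i \<and> \<pi> i > \<pi> (Suc i)) \<or> (even i \<and> \<pi> i < \<pi> (Suc i)) then 1 else 0"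
  have shift: "{1..n-1} = Suc ` {..<n-1}"
  proof (rule set_eqI)
    fix x show "x \<in> {1..n-1} \<longleftrightarrow> x \<in> Suc ` {..<n-1}" by (cases x) auto
  qed
  have "altdes n \<pi> = (\<Sum>i\<in>{1..n-1}. ?gap i)"
    unfolding altdes_def by (subst sum.inter_filter[symmetric]) auto
  also have "\<dots> = (\<Sum>j<n-1. ?gap (Suc j))"
    unfolding shift by (simp add: sum.reindex)
  also have "\<dots> = alt_des_list True (perm_word n \<pi>)"
    unfolding alt_des_list_conv_sum by (intro sum.cong) auto
  finally show ?thesis .
qed

text \<open>Permutations of \<open>{1..n}\<close> correspond bijectively to arrangements of \<open>{1..n}\<close>; since
  both sets have \<open>n!\<close> elements, injectivity suffices.\<close>

lemma bij_betw_perm_word: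
  "bij_betw (perm_word n) {\<pi>. \<pi> permutes {1..n}} (permutations_of_set (int ` {1..n}))"
proof -
  let ?S = "{\<pi>. \<pi> permutes {1..n}}" and ?T = "permutations_of_set (int ` {1..n})"
  have inj: "inj_on (perm_word n) ?S"
  proof (rule inj_onI)
    fix p q assume p: "p \<in> ?S" and q: "q \<in> ?S" and eq: "perm_word n p = perm_word n q"
    show "p = q"
    proof
      fix i show "p i = q i"
      proof (cases "i \<in> {1..n}")
        case True
        then have "perm_word n p ! (i - 1) = int (p i)" "perm_word n q ! (i - 1) = int (q i)"
          using nth_perm_word[of "i - 1" n] by auto
        then show ?thesis using eq by simp
      next
        case False
        then show ?thesis using p q by (simp add: permutes_not_in)
      qed
    qed
  qed
  have sub: "perm_word n ` ?S \<subseteq> ?T"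
  proof clarify
    fix p assume p: "p permutes {1..n}"
    have "inj_on (\<lambda>i. int (p i)) {1..<n+1}"
      using permutes_inj_on[OF p] by (auto simp: inj_on_def atLeastLessThanSuc_atLeastAtMost)
    moreover have "int ` p ` {1..n} = int ` {1..n}" using permutes_image[OF p] by simp
    ultimately show "perm_word n p \<in> ?T"
      by (auto simp: perm_word_def distinct_map atLeastLessThanSuc_atLeastAtMost image_image
               simp del: upt_Suc)
  qed
  have "card (perm_word n ` ?S) = card ?T"
    using inj by (simp add: card_image card_permutations)
  then have "perm_word n ` ?S = ?T"
    using sub by (intro card_subset_eq) auto
  then show ?thesis using inj by (simp add: bij_betw_def)
qed

lemma altEulerian_eq_alt_seq: "altEulerian n t = t * alt_seq t n"
proof -
  have "altEulerian n t = (\<Sum>\<pi>\<in>{\<pi>. \<pi> permutes {1..n}}. t * t ^ alt_des_list True (perm_word n \<pi>))"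
    unfolding altEulerian_def by (simp add: altdes_eq_alt_des_list)
  also have "\<dots> = (\<Sum>xs\<in>permutations_of_set (int ` {1..n}). t * t ^ alt_des_list True xs)"
    by (rule sum.reindex_bij_betw[OF bij_betw_perm_word])
  also have "\<dots> = t * alt_poly t (int ` {1..n})"
    by (simp add: alt_poly_def sum_distrib_left)
  also have "\<dots> = t * alt_seq t n"
    by (simp add: alt_poly_eq_alt_seq card_image)
  finally show ?thesis .
qed


section \<open>The differential equation for the exponential generating function\<close>

unbundle fps_syntax

text \<open>The reflection \<open>G(x) \<mapsto> G(-x)\<close>; it separates the even- and odd-indexed coefficients
  of the recursion for \<open>alt_seq\<close>.\<close>

definition fps_reflect :: "'a::comm_ring_1 fps \<Rightarrow> 'a fps" where
  "fps_reflect a = Abs_fps (\<lambda>n. (-1) ^ n * a $ n)"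

lemma fps_reflect_nth [simp]: "fps_reflect a $ n = (-1) ^ n * a $ n"
  by (simp add: fps_reflect_def)

lemma fps_reflect_mult: "fps_reflect (a * b) = fps_reflect a * fps_reflect b"
proof (rule fps_ext)
  fix n
  have "fps_reflect (a * b) $ n = (\<Sum>i=0..n. (-1) ^ n * (a $ i * b $ (n - i)))"
    by (simp add: fps_mult_nth sum_distrib_left)
  also have "\<dots> = (\<Sum>i=0..n. ((-1) ^ i * a $ i) * ((-1) ^ (n - i) * b $ (n - i)))"
  proof (intro sum.cong refl)
    fix i assume "i \<in> {0..n}"
    then have "(-1 :: 'a) ^ n = (-1) ^ i * (-1) ^ (n - i)" by (simp flip: power_add)
    then show "(-1) ^ n * (a $ i * b $ (n - i)) = ((-1) ^ i * a $ i) * ((-1) ^ (n - i) * b $ (n - i))"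
      by (simp add: mult_ac)
  qed
  also have "\<dots> = (fps_reflect a * fps_reflect b) $ n" by (simp add: fps_mult_nth)
  finally show "fps_reflect (a * b) $ n = (fps_reflect a * fps_reflect b) $ n" .
qed

lemma fps_reflect_add: "fps_reflect (a + b) = fps_reflect a + fps_reflect b"
  by (rule fps_ext) (simp add: algebra_simps)

lemma fps_reflect_diff: "fps_reflect (a - b) = fps_reflect a - fps_reflect b"
  by (rule fps_ext) (simp add: algebra_simps)

lemma fps_reflect_const: "fps_reflect (fps_const c) = fps_const c"
  by (rule fps_ext) simp

lemma fps_reflect_one: "fps_reflect 1 = 1"
  by (rule fps_ext) simp

lemma fps_reflect_cos: "fps_reflect (fps_cos c) = fps_cos c"
  by (rule fps_ext) (auto simp: fps_cos_def)

lemma fps_reflect_sin: "fps_reflect (fps_sin c) = - fps_sin c"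
  by (rule fps_ext) (auto simp: fps_sin_def)

definition alt_riccati :: "'a::field_char_0 \<Rightarrow> 'a fps \<Rightarrow> bool" where
  "alt_riccati t G \<longleftrightarrow> 2 * fps_const t * fps_deriv G =
     (G - fps_reflect G) * (G - (1 - fps_const t)) + fps_const t ^ 2 * (G + fps_reflect G) * G"

lemma alt_riccati_coeff:
  "alt_riccati t G \<longleftrightarrow> (\<forall>n. 2 * t * (of_nat (n + 1) * G $ (n + 1)) =
    (\<Sum>i=0..n. (G $ i - (-1) ^ i * G $ i) * (G $ (n - i) - (if n - i = 0 then 1 - t else 0)))
    + t ^ 2 * (\<Sum>i=0..n. (G $ i + (-1) ^ i * G $ i) * G $ (n - i)))"
proof -
  have scale: "(2 * fps_const t * F) $ n = 2 * t * F $ n" for F :: "'a fps" and n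
    by (simp add: numeral_fps_const mult.assoc)
  have scale2: "(fps_const t ^ 2 * F * H) $ n = t ^ 2 * (F * H) $ n" for F H :: "'a fps" and n
    by (simp add: mult.assoc)
  have shift: "(1::'a fps) $ j - fps_const t $ j = (if j = 0 then 1 - t else 0)" for j
    by simp
  show ?thesis unfolding alt_riccati_def fps_eq_iff fps_add_nth scale scale2 fps_deriv_nth
    by (simp only: fps_mult_nth shift fps_reflect_nth fps_add_nth fps_sub_nth)
qed

text \<open>For \<open>t \<noteq> 0\<close> the equation determines every coefficient from the previous ones, so a
  solution is fixed by its constant term.\<close>

lemma alt_riccati_unique:
  assumes t: "t \<noteq> 0" and G: "alt_riccati t G" and H: "alt_riccati t H" and z: "G $ 0 = H $ 0"
  shows "G = H"
proof -
  have "\<forall>m\<le>n. G $ m = H $ m" for n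
  proof (induction n)
    case 0
    then show ?case using z by simp
  next
    case (Suc n)
    have IH: "G $ m = H $ m" if "m \<le> n" for m using Suc that by simp
    have "2 * t * (of_nat (n + 1) * G $ (n + 1)) =
        (\<Sum>i=0..n. (G $ i - (-1) ^ i * G $ i) * (G $ (n - i) - (if n - i = 0 then 1 - t else 0)))
        + t ^ 2 * (\<Sum>i=0..n. (G $ i + (-1) ^ i * G $ i) * G $ (n - i))"
      using G unfolding alt_riccati_coeff by blast
    also have "\<dots> =
        (\<Sum>i=0..n. (H $ i - (-1) ^ i * H $ i) * (H $ (n - i) - (if n - i = 0 then 1 - t else 0)))
        + t ^ 2 * (\<Sum>i=0..n. (H $ i + (-1) ^ i * H $ i) * H $ (n - i))"
      using IH by (intro arg_cong2[where f = "(+)"] arg_cong2[where f = "(*)"] refl sum.cong) auto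
    also have "\<dots> = 2 * t * (of_nat (n + 1) * H $ (n + 1))"
      using H unfolding alt_riccati_coeff by metis
    finally have "G $ (n + 1) = H $ (n + 1)" using t of_nat_neq_0[of n, where 'a='a] by simp
    then show ?case using IH le_Suc_eq by auto
  qed
  then show ?thesis by (auto simp: fps_eq_iff)
qed


section \<open>The generating function of the recursion solves the equation\<close>

definition egf_coeff :: "'a::field_char_0 \<Rightarrow> nat \<Rightarrow> 'a" where
  "egf_coeff t n = (if n = 0 then 1 else t * alt_seq t n / fact n)"

lemma riccati_summand_egf_coeff:
  fixes t :: "'a::field_char_0"
  assumes "i \<le> n"
  shows "(egf_coeff t i - (-1) ^ i * egf_coeff t i)
           * (egf_coeff t (n - i) - (if n - i = 0 then 1 - t else 0))
         + t ^ 2 * ((egf_coeff t i + (-1) ^ i * egf_coeff t i) * egf_coeff t (n - i))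
       = 2 * t ^ 2 * (of_nat (n choose i) * glue_weight t i (n - i) * alt_seq t i * alt_seq t (n - i))
           / fact n"
proof -
  have binom: "of_nat (n choose i) / fact n = (1 :: 'a) / (fact i * fact (n - i))"
    using binomial_fact[OF assms, where 'a='a] by (simp add: field_simps)
  have right: "egf_coeff t (n - i) - (if n - i = 0 then 1 - t else 0) = t * alt_seq t (n - i) / fact (n - i)"
    by (simp add: egf_coeff_def)
  have "2 * t ^ 2 * (of_nat (n choose i) * glue_weight t i (n - i) * alt_seq t i * alt_seq t (n - i))
           / fact n
      = 2 * t ^ 2 * (glue_weight t i (n - i) * alt_seq t i * alt_seq t (n - i))
           * (of_nat (n choose i) / fact n)"
    by (simp add: field_simps)
  also have "\<dots> = 2 * t ^ 2 * (glue_weight t i (n - i) * alt_seq t i * alt_seq t (n - i))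
           / (fact i * fact (n - i))"
    unfolding binom by simp
  also have "\<dots> = (egf_coeff t i - (-1) ^ i * egf_coeff t i)
           * (egf_coeff t (n - i) - (if n - i = 0 then 1 - t else 0))
         + t ^ 2 * ((egf_coeff t i + (-1) ^ i * egf_coeff t i) * egf_coeff t (n - i))"
  proof (cases "even i")
    case True
    then show ?thesis unfolding right
      by (auto simp: egf_coeff_def glue_weight_def field_simps power2_eq_square)
  next
    case False
    then have "i \<noteq> 0" "0 < i" by (auto intro: odd_pos)
    then show ?thesis unfolding right using False
      by (simp add: egf_coeff_def glue_weight_def field_simps power2_eq_square)
  qed
  finally show ?thesis by simp
qed

lemma alt_riccati_egf: "alt_riccati t (Abs_fps (egf_coeff t))"
  unfolding alt_riccati_coeff fps_nth_Abs_fps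
proof
  fix n
  have "(\<Sum>i=0..n. (egf_coeff t i - (-1) ^ i * egf_coeff t i)
                     * (egf_coeff t (n - i) - (if n - i = 0 then 1 - t else 0)))
        + t ^ 2 * (\<Sum>i=0..n. (egf_coeff t i + (-1) ^ i * egf_coeff t i) * egf_coeff t (n - i))
      = (\<Sum>i\<le>n. 2 * t ^ 2 * (of_nat (n choose i) * glue_weight t i (n - i)
                     * alt_seq t i * alt_seq t (n - i)) / fact n)"
    by (simp only: atLeast0AtMost sum_distrib_left sum.distrib[symmetric])
       (intro sum.cong refl riccati_summand_egf_coeff, simp)
  also have "\<dots> = 2 * t ^ 2 * alt_seq t (Suc n) / fact n"
    by (simp add: sum_divide_distrib[symmetric] sum_distrib_left[symmetric])
  also have "\<dots> = 2 * t * (of_nat (n + 1) * egf_coeff t (n + 1))"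
    using of_nat_neq_0[of n, where 'a='a]
    by (simp add: egf_coeff_def power2_eq_square del: alt_seq.simps)
  finally show "2 * t * (of_nat (n + 1) * egf_coeff t (n + 1)) =
      (\<Sum>i=0..n. (egf_coeff t i - (-1) ^ i * egf_coeff t i)
                   * (egf_coeff t (n - i) - (if n - i = 0 then 1 - t else 0)))
      + t ^ 2 * (\<Sum>i=0..n. (egf_coeff t i + (-1) ^ i * egf_coeff t i) * egf_coeff t (n - i))"
    by simp
qed


section \<open>The closed form solves the equation\<close>

lemma closed_form_cross:
  fixes t :: "'a::field_char_0"
  assumes t1: "t \<noteq> 1"
  defines "G \<equiv> fps_const (1 - t) /
             (1 - fps_const t * (inverse (fps_cos (1 - t)) + fps_tan (1 - t)))"
  shows "G * (fps_cos (1 - t) - fps_const t * (1 + fps_sin (1 - t))) = fps_const (1 - t) * fps_cos (1 - t)"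
    and "G $ 0 = 1"
proof -
  define C where "C = fps_cos (1 - t)"
  define S where "S = fps_sin (1 - t)"
  define T where "T = fps_const t"
  define D where "D = 1 - T * (inverse C + fps_tan (1 - t))"
  have C0: "C $ 0 = 1" by (simp add: C_def)
  have invC: "inverse C * C = 1" using inverse_mult_eq_1[of C] C0 by simp
  have tan: "fps_tan (1 - t) = S * inverse C"
    by (simp add: fps_tan_def fps_divide_unit S_def C_def)
  have DC: "D * C = C - T * (1 + S)" unfolding D_def tan using invC by algebra
  have D0: "D $ 0 = 1 - t"
    using C0 by (simp add: D_def tan T_def fps_mult_nth S_def)
  have "G = fps_const (1 - t) / D" unfolding G_def D_def T_def C_def ..
  also have "\<dots> = fps_const (1 - t) * inverse D" using D0 t1 by (simp add: fps_divide_unit)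
  finally have "G * (C - T * (1 + S)) = fps_const (1 - t) * (inverse D * D) * C"
    by (simp add: DC[symmetric] mult_ac)
  also have "\<dots> = fps_const (1 - t) * C" using inverse_mult_eq_1[of D] D0 t1 by simp
  finally have cross: "G * (C - T * (1 + S)) = fps_const (1 - t) * C" .
  then show "G * (fps_cos (1 - t) - fps_const t * (1 + fps_sin (1 - t))) = fps_const (1 - t) * fps_cos (1 - t)"
    by (simp add: C_def S_def T_def)
  have "(G * (C - T * (1 + S))) $ 0 = (fps_const (1 - t) * C) $ 0" using cross by simp
  then show "G $ 0 = 1" using t1 C0 by (simp add: T_def S_def)
qed

text \<open>Differentiating
  \<open>G K = (1-t) C\<close> with \<open>K = C - t(1 + S)\<close> and reflecting it (which turns \<open>K\<close> into
  \<open>C - t(1 - S)\<close>) gives three polynomial identities from which, by \<open>C\<^sup>2 + S\<^sup>2 = 1\<close>,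
  the equation multiplied by the nonzero factor \<open>K\<^sup>2 K(-x)\<close> follows.\<close>

lemma alt_riccati_of_cross:
  fixes t :: "'a::field_char_0"
  assumes t1: "t \<noteq> 1"
    and cross: "G * (fps_cos (1 - t) - fps_const t * (1 + fps_sin (1 - t))) = fps_const (1 - t) * fps_cos (1 - t)"
  shows "alt_riccati t G"
proof -
  define C where "C = fps_cos (1 - t)"
  define S where "S = fps_sin (1 - t)"
  define T where "T = fps_const t"
  define K where "K = C - T * (1 + S)"
  define Kr where "Kr = C - T * (1 - S)"
  have one_minus_T: "fps_const (1 - t) = 1 - T"
    by (simp add: T_def fps_const_sub[symmetric])
  have A: "G * K = (1 - T) * C"
    using cross by (simp add: K_def C_def S_def T_def one_minus_T)
  have dC: "fps_deriv C = - (1 - T) * S"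
    by (simp add: C_def S_def fps_cos_deriv one_minus_T[symmetric])
  have dS: "fps_deriv S = (1 - T) * C"
    by (simp add: C_def S_def fps_sin_deriv one_minus_T[symmetric])
  have dK: "fps_deriv K = - (1 - T) * S - T * ((1 - T) * C)"
    by (simp add: K_def dC dS T_def algebra_simps)
  have dA: "fps_deriv G * K + G * fps_deriv K = (1 - T) * fps_deriv C"
    using arg_cong[OF A, of fps_deriv] by (simp add: T_def add.commute)
  have pyth: "C\<^sup>2 + S\<^sup>2 = 1" unfolding C_def S_def by (rule fps_sin_cos_sum_of_squares)
  have deriv: "fps_deriv G * K\<^sup>2 = (1 - T)\<^sup>2 * T * (1 + S)"
    using dA A dK dC pyth unfolding K_def by algebra
  have "fps_reflect K = Kr"
    by (simp add: K_def Kr_def fps_reflect_diff fps_reflect_mult fps_reflect_add fps_reflect_one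
        T_def fps_reflect_const C_def S_def fps_reflect_cos fps_reflect_sin)
  then have reflected: "fps_reflect G * Kr = (1 - T) * C"
    using arg_cong[OF A, of fps_reflect]
    by (simp add: fps_reflect_mult fps_reflect_diff fps_reflect_one T_def fps_reflect_const
        C_def fps_reflect_cos)
  have "K $ 0 \<noteq> 0" "Kr $ 0 \<noteq> 0" using t1 by (simp_all add: K_def Kr_def C_def S_def T_def)
  then have nonzero: "K\<^sup>2 * Kr \<noteq> 0" by auto
  have "K\<^sup>2 * Kr * (2 * T * fps_deriv G - ((G - fps_reflect G) * (G - (1 - T))
          + T\<^sup>2 * (G + fps_reflect G) * G)) = 0"
    using A reflected deriv pyth unfolding K_def Kr_def by algebra
  then show ?thesis using nonzero by (simp add: alt_riccati_def T_def)
qed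

theorem mainTheorem14:
  fixes t :: real
  assumes "t \<noteq> 1"
  shows "Abs_fps (\<lambda>n. if n = 0 then 1 else altEulerian n t / fact n)
       = fps_const (1 - t) /
         (1 - fps_const t * (inverse (fps_cos (1 - t)) + fps_tan (1 - t)))"
proof -
  have egf: "Abs_fps (\<lambda>n. if n = 0 then 1 else altEulerian n t / fact n) = Abs_fps (egf_coeff t)"
    by (rule fps_ext) (simp add: altEulerian_eq_alt_seq egf_coeff_def)
  show ?thesis
  proof (cases "t = 0")
    case True
    then have "Abs_fps (egf_coeff t) = 1" by (intro fps_ext) (simp add: egf_coeff_def)
    then show ?thesis using True egf by simp
  next
    case False
    show ?thesis unfolding egf
      using alt_riccati_unique[OF False alt_riccati_egf alt_riccati_of_cross[OF assms closed_form_cross(1)[OF assms]]]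
        closed_form_cross(2)[OF assms]
      by (simp add: egf_coeff_def)
  qed
qed

end
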